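(* Let $X$ be a fake weighted projective space with weights $(\lambda_0,\lambda_1,\ldots,\lambda_n)$ and associated $n$-simplex $P$. Then $$\mathrm{mult}\,P\leq\frac{|N\cap P^\circ|\,h^{n-1}}{\lambda_1\lambda_2\cdots\lambda_n},\qquad\text{where }h:=\sum_{i=0}^n\lambda_i,$$ and $P^\circ$ denotes the interior of $P$.
   Context: Let $N\cong\mathbb{Z}^n$ be a lattice and $N_\mathbb{R}:=N\otimes_\mathbb{Z}\mathbb{R}$. Let $\rho_0,\ldots,\rho_n\in N$ be primitive lattice points with $N_\mathbb{R}=\sum_{i=0}^n\mathbb{R}_{\geq0}\rho_i$. There are positive integers $\lambda_0,\ldots,\lambda_n$ with $\gcd\{\lambda_0,\ldots,\lambda_n\}=1$ such that $\sum_{i=0}^n\lambda_i\rho_i=0$. The cones $\sigma_i$ generated by $\{\rho_j: j\neq i\}$ generate a complete simplicial fan; the associated projective toric variety $X$ is called a fake weighted projective space with weights $(\lambda_0,\ldots,\lambda_n)$ (indexed consistently with the $\rho_i$), and $P:=\mathrm{conv}\{\rho_0,\ldots,\rho_n\}$ is its associated simplex. The multiplicity is $\mathrm{mult}\,P:=[N:\mathbb{Z}\rho_0+\cdots+\mathbb{Z}\rho_n]$. *)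

theory Defs
  imports "HOL-Analysis.Analysis"
begin

definition lattice_pts :: "(real ^ 'n) set" where
  "lattice_pts = {x. \<forall>j. x $ j \<in> \<int>}"

definition primitive_pt :: "real ^ 'n \<Rightarrow> bool" where
  "primitive_pt v \<longleftrightarrow> v \<in> lattice_pts \<and> v \<noteq> 0 \<and>
     (\<forall>w \<in> lattice_pts. \<forall>m::int. v = of_int m *\<^sub>R w \<longrightarrow> \<bar>m\<bar> = 1)"

definition int_span :: "(nat \<Rightarrow> real ^ 'n) \<Rightarrow> nat \<Rightarrow> (real ^ 'n) set" where
  "int_span rho n = {\<Sum>i\<in>{0..n}. of_int (c i) *\<^sub>R rho i | c :: nat \<Rightarrow> int. True}"

text \<open>Multiplicity: the index [N : Z rho_0 + ... + Z rho_n], i.e. the number of cosets.\<close>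
definition mult_simplex :: "(nat \<Rightarrow> real ^ 'n) \<Rightarrow> nat \<Rightarrow> nat" where
  "mult_simplex rho n = card (lattice_pts //
     {(x, y). x \<in> lattice_pts \<and> y \<in> lattice_pts \<and> x - y \<in> int_span rho n})"

end

theory Submission
  imports Defs
begin

text \<open>
  Put h = lam_0 + ... + lam_n, v_i = rho_i - rho_0 and u_i = lam_i / h.  The v_i (1 <= i <= n)
  form a basis of N_R, and the relation gives rho_0 = -(u_1 v_1 + ... + u_n v_n); in the
  coordinates x_i with respect to this basis the simplex P is {x. x_i >= -u_i, sum x_i <= u_0}.
  Let L = Z rho_0 + ... + Z rho_n.  For each class X of N/L, each level 0 <= j < h and each
  offset k with 0 <= k_i < lam_i, translate a representative of X by j rho_0 + sum k_i v_i and
  reduce every coordinate into (0, lam_i] modulo lam_i v_i.  Because gcd(lam) = 1 the resulting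
  mult P * h * (lam_1 ... lam_n) lattice points are pairwise distinct.  Cutting the box
  prod (0, lam_i] into h^n cells of side lengths u_i, two points of one cell differ by more than
  -u_i in every coordinate, so subtracting the point of the cell with the largest coordinate
  sum maps the cell injectively into the interior lattice points of P.  Hence
  mult P * h * prod lam_i <= h^n * (number of interior lattice points of P),
  which is the claim.
\<close>

lemma lattice_add: "x \<in> lattice_pts \<Longrightarrow> y \<in> lattice_pts \<Longrightarrow> x + y \<in> lattice_pts"
  by (auto simp: lattice_pts_def)

lemma lattice_diff: "x \<in> lattice_pts \<Longrightarrow> y \<in> lattice_pts \<Longrightarrow> x - y \<in> lattice_pts"
  by (auto simp: lattice_pts_def)

lemma lattice_scale: "x \<in> lattice_pts \<Longrightarrow> of_int m *\<^sub>R x \<in> lattice_pts"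
  by (auto simp: lattice_pts_def)

lemma lattice_sum:
  "(\<And>i. i \<in> I \<Longrightarrow> f i \<in> lattice_pts) \<Longrightarrow> sum f I \<in> lattice_pts"
  by (induction I rule: infinite_finite_induct) (auto simp: lattice_pts_def)

lemma finite_lattice_bounded:
  fixes S :: "(real ^ 'n) set"
  assumes "bounded S"
  shows "finite (lattice_pts \<inter> S)"
proof -
  obtain r where r: "\<And>x. x \<in> S \<Longrightarrow> norm x \<le> r"
    using assms bounded_iff by blast
  define R where "R = \<lceil>r\<rceil>"
  have "lattice_pts \<inter> S \<subseteq> (\<lambda>f. \<chi> j. of_int (f j)) ` (UNIV \<rightarrow>\<^sub>E {-R..R})"
  proof
    fix x assume x: "x \<in> lattice_pts \<inter> S"
    define f where "f j = \<lfloor>x $ j\<rfloor>" for j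
    have fx: "of_int (f j) = x $ j" for j
      using x by (auto simp: f_def lattice_pts_def elim!: Ints_cases)
    have "\<bar>of_int (f j)\<bar> \<le> real_of_int R" for j
      using component_le_norm_cart[of x j] r[of x] x le_of_int_ceiling[of r]
      unfolding fx R_def by (meson IntD2 order_trans)
    then have "\<bar>f j\<bar> \<le> R" for j
      by (metis of_int_abs of_int_le_iff)
    then have "f \<in> UNIV \<rightarrow>\<^sub>E {-R..R}"
      by (auto simp: abs_le_iff minus_le_iff)
    moreover have "x = (\<chi> j. of_int (f j))"
      by (simp add: vec_eq_iff fx)
    ultimately show "x \<in> (\<lambda>f. \<chi> j. of_int (f j)) ` (UNIV \<rightarrow>\<^sub>E {-R..R})"
      by blast
  qed
  then show ?thesis
    by (rule finite_subset) (intro finite_imageI finite_PiE; simp)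
qed

lemma ceiling_reduction_bounds:
  fixes x l :: real
  assumes "l > 0"
  shows "0 < x - of_int (\<lceil>x / l\<rceil> - 1) * l" and "x - of_int (\<lceil>x / l\<rceil> - 1) * l \<le> l"
proof -
  define t where "t = x / l"
  have x: "x - of_int (\<lceil>x / l\<rceil> - 1) * l = (t - of_int \<lceil>t\<rceil> + 1) * l"
    using assms by (simp add: t_def algebra_simps)
  have "0 < t - of_int \<lceil>t\<rceil> + 1" "t - of_int \<lceil>t\<rceil> + 1 \<le> 1"
    using ceiling_correct[of t] by linarith+
  then show "0 < x - of_int (\<lceil>x / l\<rceil> - 1) * l" "x - of_int (\<lceil>x / l\<rceil> - 1) * l \<le> l"
    unfolding x using assms by (simp_all add: mult_le_cancel_right1)
qed

lemma same_ceiling_diff: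
  fixes x y u :: real
  assumes "u > 0" and "\<lceil>x / u\<rceil> = \<lceil>y / u\<rceil>"
  shows "x - y > - u"
proof -
  have "x / u - y / u > -1"
    using ceiling_correct[of "x / u"] ceiling_correct[of "y / u"] assms(2) by linarith
  then show ?thesis
    using assms(1) by (simp add: field_simps)
qed

lemma dvd_of_dvd_mult_coprime_family:
  fixes h d :: nat
  assumes "\<And>a. a \<in> A \<Longrightarrow> h dvd d * a" and "Gcd A = 1"
  shows "h dvd d"
proof -
  have "h dvd Gcd ((*) d ` A)"
    using assms(1) by (auto intro: Gcd_greatest)
  then show ?thesis
    by (simp add: Gcd_mult assms(2))
qed

lemma int_spanI: "x = (\<Sum>i\<in>{0..n}. of_int (c i) *\<^sub>R rho i) \<Longrightarrow> x \<in> int_span rho n"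
  unfolding int_span_def by blast

lemma int_span_add:
  assumes "x \<in> int_span rho n" and "y \<in> int_span rho n"
  shows "x + y \<in> int_span rho n"
proof -
  obtain c d where "x = (\<Sum>i\<in>{0..n}. of_int (c i) *\<^sub>R rho i)"
    and "y = (\<Sum>i\<in>{0..n}. of_int (d i) *\<^sub>R rho i)"
    using assms unfolding int_span_def by blast
  then have "x + y = (\<Sum>i\<in>{0..n}. of_int (c i + d i) *\<^sub>R rho i)"
    by (simp add: scaleR_add_left sum.distrib)
  then show ?thesis by (rule int_spanI)
qed

lemma int_span_scale:
  assumes "x \<in> int_span rho n"
  shows "of_int m *\<^sub>R x \<in> int_span rho n"
proof -
  obtain c where "x = (\<Sum>i\<in>{0..n}. of_int (c i) *\<^sub>R rho i)"
    using assms unfolding int_span_def by blast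
  then have "of_int m *\<^sub>R x = (\<Sum>i\<in>{0..n}. of_int (m * c i) *\<^sub>R rho i)"
    by (simp add: scaleR_sum_right)
  then show ?thesis by (rule int_spanI)
qed

lemma int_span_scale_nat: "x \<in> int_span rho n \<Longrightarrow> real m *\<^sub>R x \<in> int_span rho n"
  using int_span_scale[of x rho n "int m"] by simp

lemma int_span_generator:
  assumes "j \<in> {0..n}"
  shows "rho j \<in> int_span rho n"
proof (rule int_spanI)
  show "rho j = (\<Sum>i\<in>{0..n}. of_int (if i = j then 1 else 0) *\<^sub>R rho i)"
    using assms by (simp add: if_distrib[of "\<lambda>c. of_int c *\<^sub>R _"] cong: if_cong)
qed

lemma int_span_zero: "0 \<in> int_span rho n"
  by (rule int_spanI[where c = "\<lambda>_. 0"]) simp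

lemma int_span_diff:
  "x \<in> int_span rho n \<Longrightarrow> y \<in> int_span rho n \<Longrightarrow> x - y \<in> int_span rho n"
  using int_span_add[of x rho n "of_int (-1) *\<^sub>R y"] int_span_scale[of y rho n "-1"] by simp

lemma int_span_sum:
  "(\<And>i. i \<in> I \<Longrightarrow> f i \<in> int_span rho n) \<Longrightarrow> sum f I \<in> int_span rho n"
  by (induction I rule: infinite_finite_induct) (auto intro: int_span_add int_span_zero)

lemma int_span_lattice:
  assumes "\<And>i. i \<in> {0..n} \<Longrightarrow> rho i \<in> lattice_pts"
  shows "int_span rho n \<subseteq> lattice_pts"
  using assms by (auto simp: int_span_def intro!: lattice_sum lattice_scale)

definition cong_rel :: "(nat \<Rightarrow> real ^ 'n) \<Rightarrow> nat \<Rightarrow> ((real ^ 'n) \<times> (real ^ 'n)) set" where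
  "cong_rel rho n = {(x, y). x \<in> lattice_pts \<and> y \<in> lattice_pts \<and> x - y \<in> int_span rho n}"

lemma mult_simplex_quotient: "mult_simplex rho n = card (lattice_pts // cong_rel rho n)"
  by (simp add: mult_simplex_def cong_rel_def)

lemma equiv_cong_rel: "equiv lattice_pts (cong_rel rho n)"
proof (rule equivI)
  show "cong_rel rho n \<subseteq> lattice_pts \<times> lattice_pts"
    by (auto simp: cong_rel_def)
  show "refl_on lattice_pts (cong_rel rho n)"
    by (auto simp: cong_rel_def refl_on_def int_span_zero)
  show "sym (cong_rel rho n)"
    using int_span_diff[OF int_span_zero] by (fastforce simp: cong_rel_def sym_def)
  show "trans (cong_rel rho n)"
    using int_span_add by (fastforce simp: cong_rel_def trans_def)
qed

locale fake_wps =
  fixes rho :: "nat \<Rightarrow> real ^ 'n"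
    and lam :: "nat \<Rightarrow> nat"
    and n :: nat
  assumes n_def: "n = CARD('n)"
    and prim: "\<And>i. i \<in> {0..n} \<Longrightarrow> primitive_pt (rho i)"
    and span: "\<And>x :: real ^ 'n. \<exists>a :: nat \<Rightarrow> real.
                  (\<forall>i\<in>{0..n}. a i \<ge> 0) \<and> x = (\<Sum>i\<in>{0..n}. a i *\<^sub>R rho i)"
    and lam_pos: "\<And>i. i \<in> {0..n} \<Longrightarrow> lam i > 0"
    and lam_gcd: "Gcd (lam ` {0..n}) = 1"
    and relation: "(\<Sum>i\<in>{0..n}. real (lam i) *\<^sub>R rho i) = 0"
begin

definition h :: nat where "h = (\<Sum>i\<in>{0..n}. lam i)"

definition v :: "nat \<Rightarrow> real ^ 'n" where "v i = rho i - rho 0"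

definition u :: "nat \<Rightarrow> real" where "u i = real (lam i) / real h"

lemma sum_split_first: "(\<Sum>i\<in>{0..n}. f i) = f 0 + (\<Sum>i\<in>{1..n}. f i)"
  by (simp add: sum.atLeast_Suc_atMost)

lemma h_pos: "h > 0"
  using lam_pos[of 0] by (simp add: h_def sum_split_first)

lemma u_pos: "i \<in> {0..n} \<Longrightarrow> u i > 0"
  using lam_pos h_pos by (simp add: u_def)

lemma sum_u: "(\<Sum>i\<in>{0..n}. u i) = 1"
proof -
  have "(\<Sum>i\<in>{0..n}. u i) = real h / real h"
    unfolding u_def h_def of_nat_sum by (rule sum_divide_distrib[symmetric])
  then show ?thesis
    using h_pos by simp
qed

lemma rho_lattice: "i \<in> {0..n} \<Longrightarrow> rho i \<in> lattice_pts"
  using prim primitive_pt_def by blast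

lemma affine_expansion:
  "(\<Sum>i\<in>{0..n}. a i *\<^sub>R rho i) = (\<Sum>i\<in>{1..n}. a i *\<^sub>R v i) + (\<Sum>i\<in>{0..n}. a i) *\<^sub>R rho 0"
  by (simp add: sum_split_first v_def scaleR_diff_right sum_subtractf scaleR_add_left
      flip: scaleR_sum_left)

lemma rho0_expansion: "rho 0 = - (\<Sum>i\<in>{1..n}. u i *\<^sub>R v i)"
proof -
  have "(\<Sum>i\<in>{1..n}. real (lam i) *\<^sub>R v i) + real h *\<^sub>R rho 0 = 0"
    using relation affine_expansion[of "\<lambda>i. real (lam i)"] by (simp add: h_def)
  then have "(1 / real h) *\<^sub>R (\<Sum>i\<in>{1..n}. real (lam i) *\<^sub>R v i) = - rho 0"
    using h_pos by (simp add: eq_neg_iff_add_eq_0 [symmetric])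
  then show ?thesis
    by (simp add: u_def scaleR_sum_right flip: minus_equation_iff)
qed

text \<open>Since the rho_i positively span N_R, the n edge vectors span it and hence form a basis.\<close>

lemma span_v: "span (v ` {1..n}) = UNIV"
proof -
  have "x \<in> span (v ` {1..n})" for x
  proof -
    obtain a where a: "x = (\<Sum>i\<in>{0..n}. a i *\<^sub>R rho i)"
      using span by blast
    define A where "A = (\<Sum>i\<in>{0..n}. a i)"
    have "x = (\<Sum>i\<in>{1..n}. a i *\<^sub>R v i) + A *\<^sub>R rho 0"
      unfolding a A_def by (rule affine_expansion)
    also have "\<dots> = (\<Sum>i\<in>{1..n}. (a i - A * u i) *\<^sub>R v i)"
      by (simp add: rho0_expansion scaleR_diff_left sum_subtractf scaleR_sum_right)
    finally show ?thesis
      by (simp only:) (intro span_sum span_scale span_base imageI)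
  qed
  then show ?thesis by blast
qed

lemma independent_v: "independent (v ` {1..n})" and inj_v: "inj_on v {1..n}"
proof -
  have card_le: "card (v ` {1..n}) \<le> DIM(real ^ 'n)"
    using card_image_le[of "{1..n}" v] n_def by simp
  show indep: "independent (v ` {1..n})"
    using card_le_dim_spanning[of "v ` {1..n}" UNIV] card_le span_v by (simp add: dim_UNIV)
  have "dim (v ` {1..n}) = n"
    using dim_span[of "v ` {1..n}"] span_v dim_UNIV n_def
    by (metis DIM_cart DIM_real mult_1_right)
  then have "card (v ` {1..n}) = n"
    using dim_eq_card_independent[OF indep] by simp
  then show "inj_on v {1..n}"
    by (intro eq_card_imp_inj_on) auto
qed

definition coord :: "real ^ 'n \<Rightarrow> nat \<Rightarrow> real" where
  "coord p i = representation (v ` {1..n}) p (v i)"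

lemma coord_add: "coord (p + q) i = coord p i + coord q i"
  using independent_v span_v by (simp add: coord_def representation_add)

lemma coord_scale: "coord (r *\<^sub>R p) i = r * coord p i"
  using independent_v span_v by (simp add: coord_def representation_scale)

lemma coord_diff: "coord (p - q) i = coord p i - coord q i"
  using independent_v span_v by (simp add: coord_def representation_diff)

lemma coord_sum: "coord (sum f I) i = (\<Sum>j\<in>I. coord (f j) i)"
  using independent_v span_v by (simp add: coord_def representation_sum)

lemma linear_coord: "linear (\<lambda>p. coord p i)"
  by (rule linearI) (simp_all add: coord_add coord_scale)

lemma coord_combination:
  assumes "i \<in> {1..n}"
  shows "coord (\<Sum>j\<in>{1..n}. a j *\<^sub>R v j) i = a i"
proof -
  have "coord (v j) i = (if j = i then 1 else 0)" if j: "j \<in> {1..n}" for j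
  proof -
    have "representation (v ` {1..n}) (v j) = (\<lambda>w. if w = v j then 1 else 0)"
      using j by (intro representation_basis[OF independent_v]) simp
    then show ?thesis
      using j assms inj_onD[OF inj_v] by (auto simp: coord_def)
  qed
  then have "(\<Sum>j\<in>{1..n}. a j * coord (v j) i) = a i"
    using assms by (simp add: if_distrib[of "(*) _"] cong: if_cong)
  then show ?thesis
    by (simp add: coord_sum coord_scale)
qed

lemma coord_expansion: "(\<Sum>i\<in>{1..n}. coord p i *\<^sub>R v i) = p"
proof -
  have "(\<Sum>i\<in>{1..n}. coord p i *\<^sub>R v i)
      = (\<Sum>b\<in>v ` {1..n}. representation (v ` {1..n}) p b *\<^sub>R b)"
    by (simp only: sum.reindex[OF inj_v] comp_def coord_def)
  also have "\<dots> = p"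
    using independent_v span_v by (intro sum_representation_eq) simp_all
  finally show ?thesis .
qed

lemma coord_rho0: "i \<in> {1..n} \<Longrightarrow> coord (rho 0) i = - u i"
  using coord_combination[of i u] coord_scale[of "-1" _ i] by (simp add: rho0_expansion)

text \<open>The points with coordinates x_i >= -u_i and sum x_i <= u_0 lie in the simplex P:
  their barycentric coordinates are x_i + u_i and u_0 - sum x_i.\<close>

lemma in_simplex_by_coords:
  assumes "\<And>i. i \<in> {1..n} \<Longrightarrow> - u i \<le> coord z i" and "(\<Sum>i\<in>{1..n}. coord z i) \<le> u 0"
  shows "z \<in> convex hull (rho ` {0..n})"
proof -
  define mu where "mu i = (if i = 0 then u 0 - (\<Sum>j\<in>{1..n}. coord z j) else coord z i + u i)" for i
  have mu0: "mu 0 = u 0 - (\<Sum>j\<in>{1..n}. coord z j)"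
    by (simp add: mu_def)
  have mu: "mu i = coord z i + u i" if "i \<in> {1..n}" for i
    using that by (simp add: mu_def)
  have sum_mu_edges: "(\<Sum>i\<in>{1..n}. mu i) = (\<Sum>i\<in>{1..n}. coord z i) + (\<Sum>i\<in>{1..n}. u i)"
    by (simp add: mu sum.distrib)
  have mu_nonneg: "0 \<le> mu i" if "i \<in> {0..n}" for i
    using that assms(1)[of i] assms(2) by (cases "i = 0") (auto simp: mu_def)
  have sum_mu: "(\<Sum>i\<in>{0..n}. mu i) = 1"
    using sum_u sum_mu_edges unfolding sum_split_first by (simp add: mu0)
  have "(\<Sum>i\<in>{0..n}. mu i *\<^sub>R rho i) \<in> convex hull (rho ` {0..n})"
    by (rule convex_sum[OF _ convex_convex_hull sum_mu mu_nonneg]) (auto intro: hull_inc)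
  moreover have "(\<Sum>i\<in>{0..n}. mu i *\<^sub>R rho i) = z"
  proof -
    have "(\<Sum>i\<in>{1..n}. mu i *\<^sub>R v i) = (\<Sum>i\<in>{1..n}. (coord z i + u i) *\<^sub>R v i)"
      by (rule sum.cong) (simp_all add: mu)
    then have "(\<Sum>i\<in>{0..n}. mu i *\<^sub>R rho i) = (\<Sum>i\<in>{1..n}. (coord z i + u i) *\<^sub>R v i) + rho 0"
      unfolding affine_expansion sum_mu by simp
    also have "\<dots> = (\<Sum>i\<in>{1..n}. coord z i *\<^sub>R v i) + ((\<Sum>i\<in>{1..n}. u i *\<^sub>R v i) + rho 0)"
      by (simp only: scaleR_add_left sum.distrib add.assoc)
    also have "\<dots> = z"
      using rho0_expansion by (simp only: coord_expansion) simp
    finally show ?thesis .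
  qed
  ultimately show ?thesis
    by simp
qed

text \<open>With strict inequalities they lie in the interior of P, being an open subset of P.\<close>

lemma in_interior_by_coords:
  assumes "\<And>i. i \<in> {1..n} \<Longrightarrow> - u i < coord z i" and "(\<Sum>i\<in>{1..n}. coord z i) < u 0"
  shows "z \<in> interior (convex hull (rho ` {0..n}))"
proof -
  define U where "U = (\<Inter>i\<in>{1..n}. {p. - u i < coord p i}) \<inter> {p. (\<Sum>i\<in>{1..n}. coord p i) < u 0}"
  have cont: "continuous_on UNIV (\<lambda>p. coord p i)" for i
    using linear_coord linear_conv_bounded_linear linear_continuous_on by blast
  have "open U"
    unfolding U_def
    by (intro open_Int open_INT ballI finite_atLeastAtMost open_Collect_less
        continuous_on_const continuous_on_sum cont)
  moreover have "U \<subseteq> convex hull (rho ` {0..n})"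
  proof
    fix p assume "p \<in> U"
    then show "p \<in> convex hull (rho ` {0..n})"
      unfolding U_def by (intro in_simplex_by_coords less_imp_le) auto
  qed
  moreover have "z \<in> U"
    using assms unfolding U_def by blast
  ultimately show ?thesis
    using interior_maximal by blast
qed

lemma v_in_int_span: "i \<in> {1..n} \<Longrightarrow> v i \<in> int_span rho n"
  unfolding v_def by (intro int_span_diff int_span_generator) auto

lemma int_span_subset_lattice: "int_span rho n \<subseteq> lattice_pts"
  by (intro int_span_lattice rho_lattice)

definition shift :: "real ^ 'n \<Rightarrow> nat \<Rightarrow> int" where
  "shift p i = \<lceil>coord p i / real (lam i)\<rceil> - 1"

definition reduce :: "real ^ 'n \<Rightarrow> real ^ 'n" where
  "reduce p = p - (\<Sum>i\<in>{1..n}. of_int (shift p i * int (lam i)) *\<^sub>R v i)"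

lemma coord_reduce:
  assumes "i \<in> {1..n}"
  shows "coord (reduce p) i = coord p i - of_int (shift p i) * real (lam i)"
  using coord_combination[OF assms, of "\<lambda>j. of_int (shift p j * int (lam j))"]
  by (simp add: reduce_def coord_diff)

lemma coord_reduce_bounds:
  assumes "i \<in> {1..n}"
  shows "0 < coord (reduce p) i" and "coord (reduce p) i \<le> real (lam i)"
  using ceiling_reduction_bounds[of "real (lam i)" "coord p i"] lam_pos[of i] assms
  by (simp_all add: coord_reduce shift_def)

lemma reduce_congruent: "p - reduce p \<in> int_span rho n"
proof -
  have "p - reduce p = (\<Sum>i\<in>{1..n}. of_int (shift p i * int (lam i)) *\<^sub>R v i)"
    by (simp add: reduce_def)
  also have "\<dots> \<in> int_span rho n"
    by (blast intro: int_span_sum int_span_scale v_in_int_span)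
  finally show ?thesis .
qed

abbreviation classes :: "(real ^ 'n) set set" where
  "classes \<equiv> lattice_pts // cong_rel rho n"

definition rep :: "(real ^ 'n) set \<Rightarrow> real ^ 'n" where
  "rep X = (SOME x. x \<in> X)"

lemma rep_in_class: "X \<in> classes \<Longrightarrow> rep X \<in> X"
  unfolding rep_def using in_quotient_imp_non_empty[OF equiv_cong_rel] by (simp add: some_in_eq)

lemma rep_lattice: "X \<in> classes \<Longrightarrow> rep X \<in> lattice_pts"
  using rep_in_class in_quotient_imp_subset[OF equiv_cong_rel] by blast

definition offsets :: "(nat \<Rightarrow> nat) set" where
  "offsets = PiE {1..n} (\<lambda>i. {0..<lam i})"

definition point :: "(real ^ 'n) set \<Rightarrow> nat \<Rightarrow> (nat \<Rightarrow> nat) \<Rightarrow> real ^ 'n" where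
  "point X j k = reduce (rep X + real j *\<^sub>R rho 0 + (\<Sum>i\<in>{1..n}. real (k i) *\<^sub>R v i))"

lemma point_congruent: "point X j k - rep X \<in> int_span rho n"
proof -
  define p where "p = rep X + real j *\<^sub>R rho 0 + (\<Sum>i\<in>{1..n}. real (k i) *\<^sub>R v i)"
  have "p - rep X \<in> int_span rho n"
    unfolding p_def
    by (auto intro!: int_span_add int_span_sum int_span_scale_nat int_span_generator v_in_int_span)
  then have "(p - rep X) - (p - reduce p) \<in> int_span rho n"
    using reduce_congruent by (rule int_span_diff)
  then show ?thesis
    by (simp add: point_def p_def)
qed

lemma point_lattice:
  assumes "X \<in> classes"
  shows "point X j k \<in> lattice_pts"
proof -
  have "rep X + (point X j k - rep X) \<in> lattice_pts"
    using assms point_congruent int_span_subset_lattice by (blast intro: lattice_add rep_lattice)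
  then show ?thesis
    by simp
qed

lemma coord_point:
  assumes "i \<in> {1..n}"
  shows "\<exists>m::int. coord (point X j k) i
           = coord (rep X) i - real j * u i + real (k i) + of_int m * real (lam i)"
proof -
  define p where "p = rep X + real j *\<^sub>R rho 0 + (\<Sum>i\<in>{1..n}. real (k i) *\<^sub>R v i)"
  have "coord p i = coord (rep X) i - real j * u i + real (k i)"
    using coord_combination[OF assms, of "\<lambda>i. real (k i)"] coord_rho0[OF assms]
    by (simp add: p_def coord_add coord_scale)
  then show ?thesis
    using coord_reduce[OF assms, of p] unfolding point_def p_def[symmetric]
    by (intro exI[of _ "- shift p i"]) simp
qed

lemma coord_point_bounds:
  "i \<in> {1..n} \<Longrightarrow> 0 < coord (point X j k) i"
  "i \<in> {1..n} \<Longrightarrow> coord (point X j k) i \<le> real (lam i)"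
  unfolding point_def by (simp_all add: coord_reduce_bounds)

lemma point_offset_equation:
  assumes "point X j k = point X j' k'" and "i \<in> {1..n}"
  shows "\<exists>m::int. int h * (int (k' i) - int (k i) + m * int (lam i)) = (int j' - int j) * int (lam i)"
proof -
  obtain m m' :: int where
    m: "coord (point X j k) i = coord (rep X) i - real j * u i + real (k i) + of_int m * real (lam i)" and
    m': "coord (point X j' k') i = coord (rep X) i - real j' * u i + real (k' i) + of_int m' * real (lam i)"
    using coord_point[OF assms(2)] by meson
  have "(real j' - real j) * u i = real (k' i) - real (k i) + of_int (m' - m) * real (lam i)"
    using m m' assms(1) by (simp add: algebra_simps)
  then have "real h * (real (k' i) - real (k i) + of_int (m' - m) * real (lam i))
      = (real j' - real j) * real (lam i)"
    using h_pos by (simp add: u_def field_simps)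
  then have "of_int (int h * (int (k' i) - int (k i) + (m' - m) * int (lam i)))
      = (of_int ((int j' - int j) * int (lam i)) :: real)"
    by simp
  then show ?thesis
    by (intro exI[of _ "m' - m"]) (simp only: of_int_eq_iff)
qed

text \<open>Equal points of one class have equal levels: h divides (j' - j) lam_i for all i, also
  for i = 0 via lam_0 = h - (lam_1 + ... + lam_n), so h divides j' - j by the gcd condition.\<close>

lemma point_same_level:
  assumes eq: "point X j k = point X j' k'" and "j < h" and "j' < h"
  shows "j = j'"
proof -
  have dvd_pos: "int h dvd (int j' - int j) * int (lam i)" if "i \<in> {1..n}" for i
    using point_offset_equation[OF eq that] by (metis dvd_triv_left)
  have dvd_int: "int h dvd (int j' - int j) * int (lam i)" if "i \<in> {0..n}" for i
  proof (cases "i = 0")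
    case True
    have "(int j' - int j) * int (lam 0)
        = (int j' - int j) * int h - (\<Sum>i\<in>{1..n}. (int j' - int j) * int (lam i))"
      by (simp add: h_def sum_split_first sum_distrib_left algebra_simps)
    also have "int h dvd \<dots>"
      using dvd_pos by (intro dvd_diff dvd_sum) auto
    finally show ?thesis using True by simp
  next
    case False
    then show ?thesis using that dvd_pos by simp
  qed
  define d where "d = nat \<bar>int j' - int j\<bar>"
  have "h dvd d * a" if a_in: "a \<in> lam ` {0..n}" for a
  proof -
    obtain i where i: "i \<in> {0..n}" and a: "a = lam i"
      using a_in by blast
    have "int (d * a) = \<bar>(int j' - int j) * int (lam i)\<bar>"
      by (simp add: d_def a abs_mult)
    then have "int h dvd int (d * a)"
      using dvd_int[OF i] by simp
    then show ?thesis
      by (simp only: int_dvd_int_iff)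
  qed
  then have "h dvd d"
    using lam_gcd by (rule dvd_of_dvd_mult_coprime_family)
  moreover have "d < h"
    using assms by (auto simp: d_def)
  ultimately have "d = 0"
    by (metis gr0I nat_dvd_not_less)
  then show "j = j'"
    by (simp add: d_def)
qed

text \<open>Equal points with equal level have equal offsets, since k_i' - k_i is a multiple of lam_i.\<close>

lemma point_same_offsets:
  assumes eq: "point X j k = point X j k'" and "k \<in> offsets" and "k' \<in> offsets"
  shows "k = k'"
proof (rule PiE_ext)
  show "k \<in> PiE {1..n} (\<lambda>i. {0..<lam i})" "k' \<in> PiE {1..n} (\<lambda>i. {0..<lam i})"
    using assms by (simp_all add: offsets_def)
  fix i assume i: "i \<in> {1..n}"
  obtain m where "int h * (int (k' i) - int (k i) + m * int (lam i)) = 0"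
    using point_offset_equation[OF eq i] by auto
  then have "int (k' i) - int (k i) + m * int (lam i) = 0"
    using h_pos by simp
  then have "int (k' i) - int (k i) = int (lam i) * (- m)"
    by (simp add: algebra_simps)
  then have "int (lam i) dvd int (k' i) - int (k i)"
    by (rule dvdI)
  moreover have "\<bar>int (k' i) - int (k i)\<bar> < int (lam i)"
  proof -
    have "k i < lam i" and "k' i < lam i"
      using assms i by (auto simp: offsets_def PiE_iff)
    then show ?thesis
      by (simp add: abs_less_iff)
  qed
  ultimately have "int (k' i) - int (k i) = 0"
    using dvd_imp_le_int[of "int (k' i) - int (k i)" "int (lam i)"] by fastforce
  then show "k i = k' i"
    by simp
qed

lemma inj_point:
  "inj_on (\<lambda>(X, j, k). point X j k) (classes \<times> {0..<h} \<times> offsets)"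
proof (rule inj_onI, clarsimp)
  fix X X' j j' k k'
  assume X: "X \<in> classes" "X' \<in> classes" and j: "j < h" "j' < h"
    and k: "k \<in> offsets" "k' \<in> offsets" and eq: "point X j k = point X' j' k'"
  have "rep X - rep X' = (point X' j' k' - rep X') - (point X j k - rep X)"
    using eq by simp
  then have "rep X - rep X' \<in> int_span rho n"
    using int_span_diff point_congruent by metis
  then have "(rep X, rep X') \<in> cong_rel rho n"
    using X by (simp add: cong_rel_def rep_lattice)
  then have "X = X'"
    using quotient_eq_iff[OF equiv_cong_rel X rep_in_class[OF X(1)] rep_in_class[OF X(2)]] by simp
  moreover have "j = j'"
    using eq j unfolding \<open>X = X'\<close> by (rule point_same_level)
  moreover have "k = k'"
    using eq k unfolding \<open>X = X'\<close> \<open>j = j'\<close> by (rule point_same_offsets)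
  ultimately show "X = X' \<and> j = j' \<and> k = k'" by simp
qed

abbreviation interior_points :: "(real ^ 'n) set" where
  "interior_points \<equiv> lattice_pts \<inter> interior (convex hull (rho ` {0..n}))"

lemma finite_interior_points: "finite interior_points"
proof -
  have "bounded (convex hull (rho ` {0..n}))"
    by (intro compact_imp_bounded finite_imp_compact_convex_hull) auto
  then show ?thesis
    by (intro finite_lattice_bounded bounded_subset[OF _ interior_subset])
qed

definition cell :: "real ^ 'n \<Rightarrow> nat \<Rightarrow> int" where
  "cell p = restrict (\<lambda>i. \<lceil>coord p i / u i\<rceil>) {1..n}"

definition cells :: "(nat \<Rightarrow> int) set" where
  "cells = PiE {1..n} (\<lambda>_. {1..int h})"

lemma card_cells: "card cells = h ^ n"
  by (simp add: cells_def card_PiE)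

lemma cell_point: "cell (point X j k) \<in> cells"
proof -
  have "\<lceil>coord (point X j k) i / u i\<rceil> \<in> {1..int h}" if i: "i \<in> {1..n}" for i
  proof -
    have u: "u i > 0"
      using u_pos i by auto
    have "coord (point X j k) i / u i \<le> real (lam i) / u i"
      using coord_point_bounds(2)[OF i] u by (simp add: divide_right_mono)
    also have "\<dots> = real h"
      using u h_pos lam_pos[of i] i by (simp add: u_def)
    finally have "\<lceil>coord (point X j k) i / u i\<rceil> \<le> int h"
      by (simp add: ceiling_le_iff)
    moreover have "0 < coord (point X j k) i / u i"
      using coord_point_bounds(1)[OF i] u by simp
    ultimately show ?thesis
      by (simp add: zero_less_ceiling)
  qed
  then show ?thesis
    by (simp add: cell_def cells_def)
qed

text \<open>Each cell contains at most as many lattice points as P has interior lattice points: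
  subtracting the point q with the largest coordinate sum maps the cell into the interior.\<close>

lemma card_cell_le:
  assumes "finite D" and "D \<subseteq> lattice_pts" and "\<And>p. p \<in> D \<Longrightarrow> cell p = c"
  shows "card D \<le> card interior_points"
proof (cases "D = {}")
  case False
  define f where "f p = (\<Sum>i\<in>{1..n}. coord p i)" for p
  have "Max (f ` D) \<in> f ` D"
    using assms(1) False by (intro Max_in) auto
  then obtain q where q: "q \<in> D" and fq: "f q = Max (f ` D)"
    by (metis imageE)
  have q_max: "f p \<le> f q" if "p \<in> D" for p
    unfolding fq using assms(1) that by (intro Max_ge) auto
  have "(\<lambda>p. p - q) ` D \<subseteq> interior_points"
  proof
    fix z assume "z \<in> (\<lambda>p. p - q) ` D"
    then obtain p where p: "p \<in> D" and z: "z = p - q"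
      by blast
    have "- u i < coord z i" if i: "i \<in> {1..n}" for i
    proof -
      have "cell p i = cell q i"
        using assms(3)[OF p] assms(3)[OF q] by simp
      then have "\<lceil>coord p i / u i\<rceil> = \<lceil>coord q i / u i\<rceil>"
        using i by (simp add: cell_def)
      then have "coord p i - coord q i > - u i"
        using u_pos i by (intro same_ceiling_diff) auto
      then show ?thesis
        unfolding z coord_diff .
    qed
    moreover have "(\<Sum>i\<in>{1..n}. coord z i) < u 0"
    proof -
      have "(\<Sum>i\<in>{1..n}. coord z i) = f p - f q"
        by (simp add: z f_def coord_diff sum_subtractf)
      then show ?thesis
        using q_max[OF p] u_pos[of 0] by simp
    qed
    ultimately have "z \<in> interior (convex hull (rho ` {0..n}))"
      by (rule in_interior_by_coords)
    moreover have "z \<in> lattice_pts"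
      using assms(2) p q by (auto simp: z intro: lattice_diff)
    ultimately show "z \<in> interior_points"
      by blast
  qed
  moreover have "inj_on (\<lambda>p. p - q) D"
    by (rule inj_onI) simp
  ultimately show ?thesis
    using card_inj_on_le finite_interior_points by blast
qed simp

lemma count_bound:
  assumes "finite classes"
  shows "card classes * h * (\<Prod>i\<in>{1..n}. lam i) \<le> h ^ n * card interior_points"
proof -
  define P where "P = (\<lambda>(X, j, k). point X j k) ` (classes \<times> {0..<h} \<times> offsets)"
  have finite_P: "finite P"
    using assms by (simp add: P_def offsets_def finite_PiE)
  have P_lattice: "P \<subseteq> lattice_pts"
    by (auto simp: P_def point_lattice)
  have P_cover: "P \<subseteq> (\<Union>c\<in>cells. {p \<in> P. cell p = c})"
  proof
    fix p assume "p \<in> P"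
    moreover obtain X j k where "p = point X j k"
      using \<open>p \<in> P\<close> by (auto simp: P_def)
    ultimately show "p \<in> (\<Union>c\<in>cells. {p \<in> P. cell p = c})"
      using cell_point by blast
  qed
  have "card classes * h * (\<Prod>i\<in>{1..n}. lam i) = card P"
    using card_image[OF inj_point] by (simp add: P_def card_cartesian_product offsets_def card_PiE)
  also have "\<dots> \<le> card (\<Union>c\<in>cells. {p \<in> P. cell p = c})"
    using finite_P P_cover by (intro card_mono) (auto intro: finite_subset)
  also have "\<dots> \<le> (\<Sum>c\<in>cells. card {p \<in> P. cell p = c})"
    by (rule card_UN_le) (simp add: cells_def finite_PiE)
  also have "\<dots> \<le> (\<Sum>c\<in>cells. card interior_points)"
    using finite_P P_lattice by (intro sum_mono card_cell_le) auto
  also have "\<dots> = h ^ n * card interior_points"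
    by (simp add: card_cells)
  finally show ?thesis .
qed

text \<open>The lattice has positive rank, so h^n = h * h^(n-1).\<close>

lemma n_pos: "n \<ge> 1"
  using n_def by (simp add: Suc_leI)

text \<open>The multiplicity bound follows from the count after dividing by h * lam_1 ... lam_n.
  (Were N/L infinite, its cardinality would be 0 and there would be nothing to show.)\<close>

theorem multiplicity_bound:
  "real (mult_simplex rho n)
     \<le> real (card interior_points) * real (\<Sum>i\<in>{0..n}. lam i) ^ (n - 1)
       / real (\<Prod>i\<in>{1..n}. lam i)"
proof (cases "finite classes")
  case False
  then show ?thesis
    by (simp add: mult_simplex_quotient del: of_nat_sum of_nat_prod)
next
  case True
  have prod_pos: "(\<Prod>i\<in>{1..n}. lam i) > 0"
    using lam_pos by (simp add: prod_pos)
  have "h ^ n = h * h ^ (n - 1)"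
    using n_pos by (simp add: power_eq_if)
  then have "h * (card classes * (\<Prod>i\<in>{1..n}. lam i)) \<le> h * (card interior_points * h ^ (n - 1))"
    using count_bound[OF True] by (simp add: algebra_simps)
  then have "card classes * (\<Prod>i\<in>{1..n}. lam i) \<le> card interior_points * h ^ (n - 1)"
    using h_pos by simp
  then have "real (card classes) * real (\<Prod>i\<in>{1..n}. lam i) \<le> real (card interior_points) * real h ^ (n - 1)"
    by (metis of_nat_le_iff of_nat_mult of_nat_power)
  then show ?thesis
    using prod_pos by (simp add: mult_simplex_quotient h_def pos_le_divide_eq del: of_nat_sum of_nat_prod)
qed

end

theorem mainTheorem7:
  fixes rho :: "nat \<Rightarrow> real ^ 'n"
    and lam :: "nat \<Rightarrow> nat"
    and n :: nat
  assumes n_def: "n = CARD('n)"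
    and prim: "\<And>i. i \<in> {0..n} \<Longrightarrow> primitive_pt (rho i)"
    and span: "\<And>x :: real ^ 'n. \<exists>a :: nat \<Rightarrow> real.
                  (\<forall>i\<in>{0..n}. a i \<ge> 0) \<and> x = (\<Sum>i\<in>{0..n}. a i *\<^sub>R rho i)"
    and lam_pos: "\<And>i. i \<in> {0..n} \<Longrightarrow> lam i > 0"
    and lam_gcd: "Gcd (lam ` {0..n}) = 1"
    and relation: "(\<Sum>i\<in>{0..n}. real (lam i) *\<^sub>R rho i) = 0"
  shows "real (mult_simplex rho n)
           \<le> real (card (lattice_pts \<inter> interior (convex hull (rho ` {0..n}))))
               * real (\<Sum>i\<in>{0..n}. lam i) ^ (n - 1)
             / real (\<Prod>i\<in>{1..n}. lam i)"
proof -
  interpret fake_wps rho lam n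
    using assms by (rule fake_wps.intro)
  show ?thesis
    by (rule multiplicity_bound)
qed

end
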